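(* Let $\psi$ be 1-Lipschitz with $|\psi(x)|\le|x|$. Let $\boldsymbol\theta^*\in\arg\min_{\eta_{\boldsymbol\theta}\in\mathcal F(L,\boldsymbol k,\boldsymbol s,\boldsymbol B)}\|\eta_{\boldsymbol\theta}-\eta_0\|_\infty^2$ and, for $\boldsymbol\theta=(\overline W_0,\dots,\overline W_L)$, let $\widetilde W_l=\sup_i\|\overline w_{li}-\overline w^*_{li}\|_1$. Set $c_{j-1}=\prod_{m=0}^{j-1}B_m$ (so $c_{-1}=1$). Then for any product density $q(\boldsymbol\theta)=\prod_{j=0}^Lq_j(\overline W_j)$, $$\int\|\eta_{\boldsymbol\theta}-\eta_{\boldsymbol\theta^*}\|_2^2q(\boldsymbol\theta)d\boldsymbol\theta\le\sum_{j=0}^Lc_{j-1}^2\,\mathbb E_q[\widetilde W_j^2]\prod_{m=j+1}^L\mathbb E_q[(\widetilde W_m+B_m)^2]$$ $$+2\sum_{j=0}^L\sum_{j'=0}^{j-1}c_{j-1}c_{j'-1}\,\mathbb E_q[\widetilde W_j(\widetilde W_j+B_j)]\prod_{m=j+1}^L\mathbb E_q[(\widetilde W_m+B_m)^2]\;\mathbb E_q[\widetilde W_{j'}]\prod_{m=j'+1}^{j-1}\mathbb E_q[\widetilde W_m+B_m].$$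
   Context: Depth $L\ge1$, widths $k_0=p,k_1,\dots,k_L$, $k_{L+1}=1$. For $\boldsymbol\theta=(\overline W_0,\dots,\overline W_L)$, $\overline W_l=(v_l,W_l)\in\mathbb R^{k_{l+1}\times(k_l+1)}$, $\eta_{\boldsymbol\theta}(x)=v_L+W_L\psi(v_{L-1}+W_{L-1}\psi(\cdots\psi(v_1+W_1\psi(v_0+W_0x))))$, $\psi$ applied coordinatewise. $\overline w_{lj}$ is the $j$-th row of $\overline W_l$ (and $\overline w^*_{lj}$ of $\overline W^*_l$), $\widetilde w_l=(\|\overline w_{l1}\|_1,\dots,\|\overline w_{lk_{l+1}}\|_1)$. For $\boldsymbol s,\boldsymbol B$ with $B_l\ge1$, $\mathcal F(L,\boldsymbol k,\boldsymbol s,\boldsymbol B)=\{\eta_{\boldsymbol\theta}:\|\widetilde w_l\|_0\le s_l,\ \|\widetilde w_l\|_\infty\le B_l,\ l=0,\dots,L\}$. $\eta_0:[0,1]^p\to\mathbb R$ is a given function; $\|\cdot\|_\infty$ is the sup norm over $[0,1]^p$ and $\|\cdot\|_2$ the $L^2$ norm with respect to Lebesgue (uniform) measure on $[0,1]^p$. $\mathbb E_q$ denotes expectation under $q$. *)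

theory Defs
  imports "HOL-Analysis.Analysis"
begin

text \<open>Parameters: a parameter vector theta is a function on triples (l,i,c):
  layer l (0..L), row i (< k (l+1)), column c (0..k l); column 0 is the bias
  entry v_l, columns 1..k l are the entries of W_l.\<close>

definition param_index :: "nat \<Rightarrow> (nat \<Rightarrow> nat) \<Rightarrow> (nat \<times> nat \<times> nat) set" where
  "param_index L k = {(l,i,c). l \<le> L \<and> i < k (Suc l) \<and> c \<le> k l}"

definition layer_index :: "(nat \<Rightarrow> nat) \<Rightarrow> nat \<Rightarrow> (nat \<times> nat) set" where
  "layer_index k l = {..<k (Suc l)} \<times> {..k l}"

definition param_measure :: "nat \<Rightarrow> (nat \<Rightarrow> nat) \<Rightarrow> ((nat \<times> nat \<times> nat) \<Rightarrow> real) measure" where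
  "param_measure L k = PiM (param_index L k) (\<lambda>_. lborel)"

definition layer_measure :: "(nat \<Rightarrow> nat) \<Rightarrow> nat \<Rightarrow> ((nat \<times> nat) \<Rightarrow> real) measure" where
  "layer_measure k l = PiM (layer_index k l) (\<lambda>_. lborel)"

definition layer :: "(nat \<Rightarrow> nat) \<Rightarrow> ((nat \<times> nat \<times> nat) \<Rightarrow> real) \<Rightarrow> nat \<Rightarrow> ((nat \<times> nat) \<Rightarrow> real)" where
  "layer k \<theta> l = restrict (\<lambda>(i,c). \<theta> (l,i,c)) (layer_index k l)"

fun pre :: "(real \<Rightarrow> real) \<Rightarrow> (nat \<Rightarrow> nat) \<Rightarrow> ((nat \<times> nat \<times> nat) \<Rightarrow> real)
             \<Rightarrow> (nat \<Rightarrow> real) \<Rightarrow> nat \<Rightarrow> nat \<Rightarrow> real" where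
  "pre \<psi> k \<theta> x 0 i = \<theta> (0,i,0) + (\<Sum>c<k 0. \<theta> (0,i,Suc c) * x c)"
| "pre \<psi> k \<theta> x (Suc l) i = \<theta> (Suc l,i,0) + (\<Sum>c<k (Suc l). \<theta> (Suc l,i,Suc c) * \<psi> (pre \<psi> k \<theta> x l c))"

text \<open>The network function eta_theta (output dimension k (L+1) = 1).\<close>
definition eta :: "(real \<Rightarrow> real) \<Rightarrow> nat \<Rightarrow> (nat \<Rightarrow> nat) \<Rightarrow> ((nat \<times> nat \<times> nat) \<Rightarrow> real)
                    \<Rightarrow> (nat \<Rightarrow> real) \<Rightarrow> real" where
  "eta \<psi> L k \<theta> x = pre \<psi> k \<theta> x L 0"

definition row_l1 :: "(nat \<Rightarrow> nat) \<Rightarrow> ((nat \<times> nat \<times> nat) \<Rightarrow> real) \<Rightarrow> nat \<Rightarrow> nat \<Rightarrow> real" where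
  "row_l1 k \<theta> l i = (\<Sum>c\<le>k l. \<bar>\<theta> (l,i,c)\<bar>)"

text \<open>Membership of eta_theta in F(L,k,s,B): theta is a parameter vector with
  ||w~_l||_0 \<le> s_l and ||w~_l||_inf \<le> B_l for l = 0..L.\<close>
definition in_F :: "nat \<Rightarrow> (nat \<Rightarrow> nat) \<Rightarrow> (nat \<Rightarrow> nat) \<Rightarrow> (nat \<Rightarrow> real)
                     \<Rightarrow> ((nat \<times> nat \<times> nat) \<Rightarrow> real) \<Rightarrow> bool" where
  "in_F L k s B \<theta> \<longleftrightarrow> \<theta> \<in> space (param_measure L k) \<and>
     (\<forall>l\<le>L. card {i\<in>{..<k (Suc l)}. row_l1 k \<theta> l i \<noteq> 0} \<le> s l \<and>
             (\<forall>i<k (Suc l). row_l1 k \<theta> l i \<le> B l))"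

definition cube :: "nat \<Rightarrow> (nat \<Rightarrow> real) set" where
  "cube p = {..<p} \<rightarrow>\<^sub>E {0..1}"

text \<open>Sup norm over [0,1]^p (in ennreal, so possibly infinite).\<close>
definition sup_dist :: "nat \<Rightarrow> ((nat \<Rightarrow> real) \<Rightarrow> real) \<Rightarrow> ((nat \<Rightarrow> real) \<Rightarrow> real) \<Rightarrow> ennreal" where
  "sup_dist p f g = (SUP x\<in>cube p. ennreal \<bar>f x - g x\<bar>)"

definition L2_dist_sq :: "nat \<Rightarrow> ((nat \<Rightarrow> real) \<Rightarrow> real) \<Rightarrow> ((nat \<Rightarrow> real) \<Rightarrow> real) \<Rightarrow> ennreal" where
  "L2_dist_sq p f g = (\<integral>\<^sup>+ x\<in>cube p. ennreal ((f x - g x)\<^sup>2) \<partial>(PiM {..<p} (\<lambda>_. lborel)))"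

definition Wdist :: "(nat \<Rightarrow> nat) \<Rightarrow> ((nat \<times> nat \<times> nat) \<Rightarrow> real) \<Rightarrow> nat
                      \<Rightarrow> ((nat \<times> nat \<times> nat) \<Rightarrow> real) \<Rightarrow> ennreal" where
  "Wdist k \<theta>s l \<theta> = (SUP i\<in>{..<k (Suc l)}. ennreal (\<Sum>c\<le>k l. \<bar>\<theta> (l,i,c) - \<theta>s (l,i,c)\<bar>))"

definition prod_density :: "nat \<Rightarrow> (nat \<Rightarrow> nat) \<Rightarrow> (nat \<Rightarrow> ((nat \<times> nat) \<Rightarrow> real) \<Rightarrow> real)
                             \<Rightarrow> ((nat \<times> nat \<times> nat) \<Rightarrow> real) \<Rightarrow> real" where
  "prod_density L k q \<theta> = (\<Prod>j\<le>L. q j (layer k \<theta> j))"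

definition Eq :: "nat \<Rightarrow> (nat \<Rightarrow> nat) \<Rightarrow> (nat \<Rightarrow> ((nat \<times> nat) \<Rightarrow> real) \<Rightarrow> real)
                   \<Rightarrow> (((nat \<times> nat \<times> nat) \<Rightarrow> real) \<Rightarrow> ennreal) \<Rightarrow> ennreal" where
  "Eq L k q f = (\<integral>\<^sup>+ \<theta>. f \<theta> * ennreal (prod_density L k q \<theta>) \<partial>(param_measure L k))"

end

theory Submission imports Defs begin

(* Let S_l(theta) = sum_{j<=l} c_{j-1} W_j prod_{j<m<=l} (W_m + B_m). By induction over the layers,
   the pre-activations of layer l under theta and theta* differ by at most S_l(theta) on the cube:
   the new weight error W_l meets activations of theta*, which are bounded by c_{l-1}, while the
   error accumulated so far passes through the 1-Lipschitz psi and a row of l1-norm at most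
   W_l + B_l. As the cube has measure one, ||eta_theta - eta_theta*||_2^2 <= S_L(theta)^2. In the
   expansion of S_L(theta)^2 every summand is a product of functions of distinct layers, so its
   expectation under a product density is the product of the expectations. *)

section \<open>Perturbation of the network\<close>

lemma abs_affine_le:
  fixes a y :: "nat \<Rightarrow> real"
  assumes b: "\<bar>b\<bar> \<le> \<bar>a 0\<bar> * M" and y: "\<And>c. c < n \<Longrightarrow> \<bar>y c\<bar> \<le> M"
  shows "\<bar>b + (\<Sum>c<n. a (Suc c) * y c)\<bar> \<le> (\<Sum>c\<le>n. \<bar>a c\<bar>) * M"
proof -
  have "\<bar>\<Sum>c<n. a (Suc c) * y c\<bar> \<le> (\<Sum>c<n. \<bar>a (Suc c)\<bar> * M)"
    by (rule order_trans[OF sum_abs], rule sum_mono) (use y in \<open>auto simp: abs_mult intro!: mult_left_mono\<close>)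
  then have "\<bar>b + (\<Sum>c<n. a (Suc c) * y c)\<bar> \<le> \<bar>a 0\<bar> * M + (\<Sum>c<n. \<bar>a (Suc c)\<bar> * M)"
    using b abs_triangle_ineq[of b "\<Sum>c<n. a (Suc c) * y c"] by linarith
  also have "\<dots> = (\<Sum>c\<le>n. \<bar>a c\<bar>) * M"
    by (simp add: sum.atMost_shift sum_distrib_right distrib_right)
  finally show ?thesis .
qed

text \<open>How far the pre-activations of layer \<open>l\<close> can move when the rows of each layer \<open>m\<close> are
  perturbed by at most \<open>w m\<close> in \<open>\<ell>\<^sub>1\<close>-norm and the unperturbed rows have norm at most \<open>B m\<close>.\<close>

definition perturbation_bound :: "(nat \<Rightarrow> real) \<Rightarrow> (nat \<Rightarrow> real) \<Rightarrow> nat \<Rightarrow> real" where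
  "perturbation_bound B w l = (\<Sum>j\<le>l. (\<Prod>m<j. B m) * w j * (\<Prod>m\<in>{Suc j..l}. w m + B m))"

lemma perturbation_bound_0 [simp]: "perturbation_bound B w 0 = w 0"
  by (simp add: perturbation_bound_def)

lemma perturbation_bound_Suc:
  "perturbation_bound B w (Suc l) = (\<Prod>m\<le>l. B m) * w (Suc l) + (w (Suc l) + B (Suc l)) * perturbation_bound B w l"
proof -
  have "(\<Sum>j\<le>l. (\<Prod>m<j. B m) * w j * (\<Prod>m\<in>{Suc j..Suc l}. w m + B m))
      = (\<Sum>j\<le>l. (\<Prod>m<j. B m) * w j * (\<Prod>m\<in>{Suc j..l}. w m + B m) * (w (Suc l) + B (Suc l)))"
    by (intro sum.cong) auto
  then show ?thesis
    by (simp add: perturbation_bound_def sum_distrib_right sum_distrib_left lessThan_Suc_atMost algebra_simps)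
qed

lemma perturbation_bound_nonneg:
  "(\<And>m. m \<le> l \<Longrightarrow> 0 \<le> w m) \<Longrightarrow> (\<And>m. m \<le> l \<Longrightarrow> 0 \<le> B m) \<Longrightarrow> 0 \<le> perturbation_bound B w l"
  unfolding perturbation_bound_def by (intro sum_nonneg mult_nonneg_nonneg prod_nonneg) auto

lemma abs_affine_layer_diff_le:
  fixes u v a b :: "nat \<Rightarrow> real"
  assumes lip: "\<And>x y. \<bar>\<psi> x - \<psi> y\<bar> \<le> \<bar>x - y\<bar>"
    and bP: "\<And>c. c < n \<Longrightarrow> \<bar>\<psi> (b c)\<bar> \<le> P" and P: "1 \<le> P"
    and abS: "\<And>c. c < n \<Longrightarrow> \<bar>a c - b c\<bar> \<le> S" and S: "0 \<le> S"
    and uv: "(\<Sum>c\<le>n. \<bar>u c - v c\<bar>) \<le> w" and v: "(\<Sum>c\<le>n. \<bar>v c\<bar>) \<le> B"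
  shows "\<bar>(u 0 + (\<Sum>c<n. u (Suc c) * \<psi> (a c))) - (v 0 + (\<Sum>c<n. v (Suc c) * \<psi> (b c)))\<bar>
       \<le> w * P + (w + B) * S"
proof -
  let ?d = "\<lambda>c. u c - v c"
  have "(u 0 + (\<Sum>c<n. u (Suc c) * \<psi> (a c))) - (v 0 + (\<Sum>c<n. v (Suc c) * \<psi> (b c)))
      = (?d 0 + (\<Sum>c<n. ?d (Suc c) * \<psi> (b c))) + (0 + (\<Sum>c<n. u (Suc c) * (\<psi> (a c) - \<psi> (b c))))"
    by (simp add: sum_subtractf[symmetric] sum.distrib[symmetric] algebra_simps)
  moreover have "\<bar>?d 0 + (\<Sum>c<n. ?d (Suc c) * \<psi> (b c))\<bar> \<le> (\<Sum>c\<le>n. \<bar>?d c\<bar>) * P"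
    using bP P by (intro abs_affine_le) (auto simp: mult_le_cancel_left1)
  moreover have "\<bar>0 + (\<Sum>c<n. u (Suc c) * (\<psi> (a c) - \<psi> (b c)))\<bar> \<le> (\<Sum>c\<le>n. \<bar>u c\<bar>) * S"
    using S order_trans[OF lip abS] by (intro abs_affine_le) auto
  moreover have "(\<Sum>c\<le>n. \<bar>u c\<bar>) \<le> (\<Sum>c\<le>n. \<bar>?d c\<bar>) + (\<Sum>c\<le>n. \<bar>v c\<bar>)"
    unfolding sum.distrib[symmetric] by (intro sum_mono) linarith
  ultimately show ?thesis
    using uv v P S mult_right_mono[of "\<Sum>c\<le>n. \<bar>?d c\<bar>" w P] mult_right_mono[of "\<Sum>c\<le>n. \<bar>u c\<bar>" "w + B" S]
    by (smt (verit) abs_triangle_ineq)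
qed

lemma abs_pre_le_prod:
  assumes B: "\<And>l. l \<le> L \<Longrightarrow> 1 \<le> B l"
    and psi: "\<And>x. \<bar>\<psi> x\<bar> \<le> \<bar>x\<bar>"
    and row: "\<And>l i. l \<le> L \<Longrightarrow> i < k (Suc l) \<Longrightarrow> row_l1 k \<theta> l i \<le> B l"
    and x: "\<And>c. c < k 0 \<Longrightarrow> \<bar>x c\<bar> \<le> 1"
  shows "l \<le> L \<Longrightarrow> i < k (Suc l) \<Longrightarrow> \<bar>pre \<psi> k \<theta> x l i\<bar> \<le> (\<Prod>m\<le>l. B m)"
proof (induction l arbitrary: i)
  case 0
  have "\<bar>pre \<psi> k \<theta> x 0 i\<bar> \<le> row_l1 k \<theta> 0 i * 1"
    using abs_affine_le[where b="\<theta> (0,i,0)" and a="\<lambda>c. \<theta> (0,i,c)" and M=1] x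
    by (simp add: row_l1_def)
  also have "\<dots> \<le> B 0" using row 0 by simp
  finally show ?case by simp
next
  case (Suc l)
  let ?P = "\<Prod>m\<le>l. B m"
  have P: "1 \<le> ?P" using B Suc.prems by (intro prod_ge_1) auto
  have act: "\<bar>\<psi> (pre \<psi> k \<theta> x l c)\<bar> \<le> ?P" if "c < k (Suc l)" for c
    using order_trans[OF psi Suc.IH[OF _ that]] Suc.prems by simp
  have "\<bar>pre \<psi> k \<theta> x (Suc l) i\<bar> \<le> row_l1 k \<theta> (Suc l) i * ?P"
    unfolding row_l1_def pre.simps
    by (rule abs_affine_le) (use P act in \<open>auto simp: mult_le_cancel_left1\<close>)
  also have "\<dots> \<le> B (Suc l) * ?P"
    using row Suc.prems P by (intro mult_right_mono) auto
  finally show ?case by (simp add: mult.commute)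
qed

lemma abs_pre_diff_le:
  assumes B: "\<And>l. l \<le> L \<Longrightarrow> 1 \<le> B l"
    and lip: "\<And>x y. \<bar>\<psi> x - \<psi> y\<bar> \<le> \<bar>x - y\<bar>"
    and psi: "\<And>x. \<bar>\<psi> x\<bar> \<le> \<bar>x\<bar>"
    and row: "\<And>l i. l \<le> L \<Longrightarrow> i < k (Suc l) \<Longrightarrow> row_l1 k \<theta>s l i \<le> B l"
    and w: "\<And>l i. l \<le> L \<Longrightarrow> i < k (Suc l) \<Longrightarrow> (\<Sum>c\<le>k l. \<bar>\<theta> (l,i,c) - \<theta>s (l,i,c)\<bar>) \<le> w l"
    and w0: "\<And>l. 0 \<le> w l"
    and x: "\<And>c. c < k 0 \<Longrightarrow> \<bar>x c\<bar> \<le> 1"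
  shows "l \<le> L \<Longrightarrow> i < k (Suc l) \<Longrightarrow> \<bar>pre \<psi> k \<theta> x l i - pre \<psi> k \<theta>s x l i\<bar> \<le> perturbation_bound B w l"
proof (induction l arbitrary: i)
  case 0
  let ?d = "\<lambda>c. \<theta> (0,i,c) - \<theta>s (0,i,c)"
  have "pre \<psi> k \<theta> x 0 i - pre \<psi> k \<theta>s x 0 i = ?d 0 + (\<Sum>c<k 0. ?d (Suc c) * x c)"
    by (simp add: sum_subtractf algebra_simps)
  also have "\<bar>\<dots>\<bar> \<le> (\<Sum>c\<le>k 0. \<bar>?d c\<bar>) * 1"
    using x by (intro abs_affine_le) auto
  also have "\<dots> \<le> w 0" using w 0 by simp
  finally show ?case by simp
next
  case (Suc l)
  let ?P = "\<Prod>m\<le>l. B m"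
  have "\<bar>\<psi> (pre \<psi> k \<theta>s x l c)\<bar> \<le> ?P" if "c < k (Suc l)" for c
    using order_trans[OF psi abs_pre_le_prod[OF B psi row x, where l=l and i=c]] Suc.prems that by simp
  moreover have "1 \<le> ?P" using B Suc.prems by (intro prod_ge_1) auto
  moreover have "0 \<le> perturbation_bound B w l"
    using B Suc.prems w0 by (intro perturbation_bound_nonneg) (auto intro: order_trans[OF zero_le_one])
  ultimately have "\<bar>pre \<psi> k \<theta> x (Suc l) i - pre \<psi> k \<theta>s x (Suc l) i\<bar>
      \<le> w (Suc l) * ?P + (w (Suc l) + B (Suc l)) * perturbation_bound B w l"
    unfolding pre.simps
    by (intro abs_affine_layer_diff_le[OF lip]) (use Suc w row in \<open>auto simp: row_l1_def\<close>)
  then show ?case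
    by (simp add: perturbation_bound_Suc mult.commute)
qed

lemma ennreal_perturbation_bound:
  assumes w0: "\<And>m. 0 \<le> w m" and B0: "\<And>m. m \<le> L \<Longrightarrow> 0 \<le> B m"
  shows "ennreal (perturbation_bound B w L)
       = (\<Sum>j\<le>L. ennreal (\<Prod>m<j. B m) * ennreal (w j) * (\<Prod>m\<in>{Suc j..L}. ennreal (w m) + ennreal (B m)))"
proof -
  have "ennreal ((\<Prod>m<j. B m) * w j * (\<Prod>m\<in>{Suc j..L}. w m + B m))
      = ennreal (\<Prod>m<j. B m) * ennreal (w j) * (\<Prod>m\<in>{Suc j..L}. ennreal (w m) + ennreal (B m))"
    if "j \<le> L" for j
  proof -
    have "ennreal (\<Prod>m\<in>{Suc j..L}. w m + B m) = (\<Prod>m\<in>{Suc j..L}. ennreal (w m + B m))"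
      using B0 w0 by (intro prod_ennreal[symmetric]) (auto intro: add_nonneg_nonneg)
    also have "\<dots> = (\<Prod>m\<in>{Suc j..L}. ennreal (w m) + ennreal (B m))"
      using B0 w0 by (intro prod.cong refl ennreal_plus) auto
    moreover have "0 \<le> (\<Prod>m<j. B m)" "0 \<le> (\<Prod>m\<in>{Suc j..L}. w m + B m)"
      using B0 w0 that by (auto intro!: prod_nonneg add_nonneg_nonneg)
    ultimately show ?thesis using w0 by (simp add: ennreal_mult)
  qed
  moreover have "ennreal (perturbation_bound B w L)
      = (\<Sum>j\<le>L. ennreal ((\<Prod>m<j. B m) * w j * (\<Prod>m\<in>{Suc j..L}. w m + B m)))"
    unfolding perturbation_bound_def using B0 w0
    by (intro sum_ennreal[symmetric] mult_nonneg_nonneg prod_nonneg) (auto intro: add_nonneg_nonneg)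
  ultimately show ?thesis by simp
qed

lemma row_dist_le_Wdist:
  "i < k (Suc l) \<Longrightarrow> ennreal (\<Sum>c\<le>k l. \<bar>\<theta> (l,i,c) - \<theta>s (l,i,c)\<bar>) \<le> Wdist k \<theta>s l \<theta>"
  unfolding Wdist_def by (intro SUP_upper) auto

lemma Wdist_less_top: "Wdist k \<theta>s m \<theta> < top"
proof -
  have "Wdist k \<theta>s m \<theta> \<le> ennreal (\<Sum>i<k (Suc m). \<Sum>c\<le>k m. \<bar>\<theta> (m,i,c) - \<theta>s (m,i,c)\<bar>)"
    unfolding Wdist_def by (intro SUP_least ennreal_leI member_le_sum sum_nonneg) auto
  then show ?thesis using order.strict_trans1 ennreal_less_top by blast
qed

lemma cube_measure: "emeasure (PiM {..<p} (\<lambda>_. lborel::real measure)) (cube p) = 1"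
proof -
  interpret product_sigma_finite "\<lambda>_::nat. lborel::real measure" by standard
  show ?thesis by (simp add: cube_def emeasure_PiM)
qed

lemma L2_dist_sq_eta_le:
  assumes k0: "k 0 = p" and kL: "k (Suc L) = 1"
    and B: "\<And>l. l \<le> L \<Longrightarrow> 1 \<le> B l"
    and lip: "\<And>x y. \<bar>\<psi> x - \<psi> y\<bar> \<le> \<bar>x - y\<bar>"
    and psi: "\<And>x. \<bar>\<psi> x\<bar> \<le> \<bar>x\<bar>"
    and row: "\<And>l i. l \<le> L \<Longrightarrow> i < k (Suc l) \<Longrightarrow> row_l1 k \<theta>s l i \<le> B l"
  shows "L2_dist_sq p (eta \<psi> L k \<theta>) (eta \<psi> L k \<theta>s)
       \<le> (\<Sum>j\<le>L. ennreal (\<Prod>m<j. B m) * Wdist k \<theta>s j \<theta> * (\<Prod>m\<in>{Suc j..L}. Wdist k \<theta>s m \<theta> + ennreal (B m)))\<^sup>2"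
proof -
  let ?d = "\<lambda>l i. \<Sum>c\<le>k l. \<bar>\<theta> (l,i,c) - \<theta>s (l,i,c)\<bar>"
  define w where "w m = enn2real (Wdist k \<theta>s m \<theta>)" for m
  have Ww: "Wdist k \<theta>s m \<theta> = ennreal (w m)" for m
    unfolding w_def using Wdist_less_top by simp
  have w0: "0 \<le> w m" for m by (simp add: w_def)
  have w: "?d l i \<le> w l" if "i < k (Suc l)" for l i
    using row_dist_le_Wdist[where \<theta>=\<theta> and \<theta>s=\<theta>s and k=k and l=l, OF that] w0 by (simp add: Ww)
  have B0: "\<And>m. m \<le> L \<Longrightarrow> 0 \<le> B m" using B by (meson order.trans zero_le_one)
  let ?S = "perturbation_bound B w L"
  have S0: "0 \<le> ?S" using w0 B0 by (intro perturbation_bound_nonneg)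
  have pt: "(eta \<psi> L k \<theta> x - eta \<psi> L k \<theta>s x)\<^sup>2 \<le> ?S\<^sup>2" if "x \<in> cube p" for x
  proof -
    have "\<And>c. c < k 0 \<Longrightarrow> \<bar>x c\<bar> \<le> 1" using that k0 by (auto simp: cube_def PiE_iff)
    then have "\<bar>eta \<psi> L k \<theta> x - eta \<psi> L k \<theta>s x\<bar> \<le> ?S"
      using abs_pre_diff_le[OF B lip psi row w w0, where x=x and l=L and i=0] kL by (simp add: eta_def)
    then show ?thesis using S0 by (simp add: power2_le_iff_abs_le)
  qed
  have "L2_dist_sq p (eta \<psi> L k \<theta>) (eta \<psi> L k \<theta>s)
      \<le> (\<integral>\<^sup>+x. ennreal (?S\<^sup>2) * indicator (cube p) x \<partial>PiM {..<p} (\<lambda>_. lborel))"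
    unfolding L2_dist_sq_def
    by (intro nn_integral_mono) (auto split: split_indicator intro!: ennreal_leI pt)
  also have "\<dots> = (ennreal ?S)\<^sup>2"
    using S0 cube_measure
    by (simp add: nn_integral_cmult_indicator ennreal_power cube_def sets_PiM_I_finite)
  also have "ennreal ?S = (\<Sum>j\<le>L. ennreal (\<Prod>m<j. B m) * Wdist k \<theta>s j \<theta> * (\<Prod>m\<in>{Suc j..L}. Wdist k \<theta>s m \<theta> + ennreal (B m)))"
    unfolding Ww by (rule ennreal_perturbation_bound[OF w0 B0])
  finally show ?thesis .
qed

section \<open>Lebesgue measure on the parameter space\<close>

lemma distr_PiM_reindex:
  fixes f :: "'i \<Rightarrow> 'j"
  assumes M: "sigma_finite_measure M" and fin: "finite I" and bij: "bij_betw f I K"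
  shows "distr (PiM K (\<lambda>_. M)) (PiM I (\<lambda>_. M)) (\<lambda>\<omega>. \<lambda>n\<in>I. \<omega> (f n)) = PiM I (\<lambda>_. M)"
proof -
  interpret P: product_sigma_finite "\<lambda>_::'i. M" using M by (simp add: product_sigma_finite_def)
  interpret Q: product_sigma_finite "\<lambda>_::'j. M" using M by (simp add: product_sigma_finite_def)
  let ?r = "\<lambda>\<omega>. \<lambda>n\<in>I. \<omega> (f n)" and ?g = "the_inv_into I f"
  have fK: "\<And>n. n \<in> I \<Longrightarrow> f n \<in> K" using bij by (auto simp: bij_betw_def)
  have gI: "\<And>j. j \<in> K \<Longrightarrow> ?g j \<in> I" using bij by (metis bij_betw_def the_inv_into_into order_refl)
  have fg: "\<And>j. j \<in> K \<Longrightarrow> f (?g j) = j" using bij by (metis bij_betw_def f_the_inv_into_f)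
  have gf: "\<And>n. n \<in> I \<Longrightarrow> ?g (f n) = n" using bij by (metis bij_betw_def the_inv_into_f_f)
  have r: "?r \<in> measurable (PiM K (\<lambda>_. M)) (PiM I (\<lambda>_. M))"
    by (rule measurable_restrict) (simp add: fK)
  show ?thesis
  proof (rule P.PiM_eqI[OF fin])
    fix A assume A: "\<And>i. i \<in> I \<Longrightarrow> A i \<in> sets M"
    have "?r -` PiE I A \<inter> space (PiM K (\<lambda>_. M)) = PiE K (\<lambda>j. A (?g j))"
    proof (intro set_eqI iffI)
      fix \<omega> assume "\<omega> \<in> ?r -` PiE I A \<inter> space (PiM K (\<lambda>_. M))"
      then have a: "\<And>n. n \<in> I \<Longrightarrow> \<omega> (f n) \<in> A n" and "\<omega> \<in> extensional K"
        by (auto simp: space_PiM PiE_iff)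
      with a[OF gI] fg show "\<omega> \<in> PiE K (\<lambda>j. A (?g j))" by (auto simp: PiE_iff)
    next
      fix \<omega> assume "\<omega> \<in> PiE K (\<lambda>j. A (?g j))"
      then have a: "\<And>j. j \<in> K \<Longrightarrow> \<omega> j \<in> A (?g j)" and "\<omega> \<in> extensional K"
        by (auto simp: PiE_iff)
      moreover have "A (?g j) \<subseteq> space M" if "j \<in> K" for j
        using A gI that sets.sets_into_space by blast
      ultimately show "\<omega> \<in> ?r -` PiE I A \<inter> space (PiM K (\<lambda>_. M))"
        using fK gf by (fastforce simp: space_PiM PiE_iff)
    qed
    then have "emeasure (distr (PiM K (\<lambda>_. M)) (PiM I (\<lambda>_. M)) ?r) (PiE I A)
        = (\<Prod>j\<in>K. emeasure M (A (?g j)))"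
      using A gI bij_betw_finite[OF bij] fin
      by (simp add: emeasure_distr[OF r] Q.emeasure_PiM)
    also have "\<dots> = (\<Prod>n\<in>I. emeasure M (A n))"
      using gf by (subst prod.reindex_bij_betw[symmetric, OF bij]) (auto intro!: prod.cong)
    finally show "emeasure (distr (PiM K (\<lambda>_. M)) (PiM I (\<lambda>_. M)) ?r) (PiE I A) = (\<Prod>n\<in>I. emeasure M (A n))" .
  qed simp
qed

lemma finite_layer_index [simp]: "finite (layer_index k j)"
  by (simp add: layer_index_def)

lemma product_sigma_finite_layer_measure: "product_sigma_finite (layer_measure k)"
  unfolding product_sigma_finite_def layer_measure_def
proof
  fix j
  interpret product_sigma_finite "\<lambda>_::nat \<times> nat. lborel::real measure" by standard
  show "sigma_finite_measure (PiM (layer_index k j) (\<lambda>_. lborel::real measure))"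
    by (rule sigma_finite) simp
qed

lemma layer_eq_restrict: "layer k \<theta> j = (\<lambda>n\<in>layer_index k j. \<theta> ((\<lambda>(i,c). (j,i,c)) n))"
  by (auto simp: layer_def restrict_def split_def)

lemma measurable_layer:
  assumes "Sigma {j} (layer_index k) \<subseteq> I"
  shows "(\<lambda>\<theta>. layer k \<theta> j) \<in> measurable (PiM I (\<lambda>_. lborel::real measure)) (layer_measure k j)"
  unfolding layer_eq_restrict layer_measure_def
  by (rule measurable_restrict) (use assms in \<open>auto intro!: measurable_component_singleton\<close>)

lemma nn_integral_layer_block:
  assumes H: "H \<in> borel_measurable (layer_measure k j)"
  shows "(\<integral>\<^sup>+\<theta>. H (layer k \<theta> j) \<partial>PiM (Sigma {j} (layer_index k)) (\<lambda>_. lborel)) = (\<integral>\<^sup>+w. H w \<partial>layer_measure k j)"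
proof -
  have bij: "bij_betw (\<lambda>(i,c). (j,i,c)) (layer_index k j) (Sigma {j} (layer_index k))"
    by (auto simp: bij_betw_def inj_on_def)
  have r: "(\<lambda>\<omega>. \<lambda>n\<in>layer_index k j. \<omega> ((\<lambda>(i,c). (j,i,c)) n))
      \<in> measurable (PiM (Sigma {j} (layer_index k)) (\<lambda>_. lborel::real measure)) (PiM (layer_index k j) (\<lambda>_. lborel))"
    by (rule measurable_restrict) auto
  show ?thesis
    unfolding layer_eq_restrict
    using distr_PiM_reindex[OF lborel.sigma_finite_measure_axioms[where 'a=real] finite_layer_index bij]
      nn_integral_distr[OF r, of H] H
    by (simp add: layer_measure_def)
qed

lemma nn_integral_layers:
  assumes "finite J" and "F \<in> borel_measurable (PiM J (layer_measure k))"
  shows "(\<integral>\<^sup>+\<theta>. F (\<lambda>j\<in>J. layer k \<theta> j) \<partial>PiM (Sigma J (layer_index k)) (\<lambda>_. lborel))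
       = (\<integral>\<^sup>+\<omega>. F \<omega> \<partial>PiM J (layer_measure k))"
proof -
  interpret P: product_sigma_finite "\<lambda>_::nat\<times>nat\<times>nat. lborel::real measure" by standard
  interpret Q: product_sigma_finite "layer_measure k" by (rule product_sigma_finite_layer_measure)
  show ?thesis
    using assms
  proof (induction J arbitrary: F rule: finite_induct)
    case empty
    show ?case by (simp add: P.nn_integral_empty Q.nn_integral_empty space_PiM_empty)
  next
    case (insert j J F)
    let ?SJ = "Sigma J (layer_index k)" and ?Sj = "Sigma {j} (layer_index k)"
    have disj: "?SJ \<inter> ?Sj = {}" using insert(2) by auto
    have un: "Sigma (insert j J) (layer_index k) = ?SJ \<union> ?Sj" by auto
    have mR: "(\<lambda>\<theta>. \<lambda>j'\<in>insert j J. layer k \<theta> j')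
        \<in> measurable (PiM (?SJ \<union> ?Sj) (\<lambda>_. lborel::real measure)) (PiM (insert j J) (layer_measure k))"
      by (rule measurable_restrict, rule measurable_layer) auto
    define G where "G \<omega> = (\<integral>\<^sup>+w. F (fun_upd \<omega> j w) \<partial>layer_measure k j)" for \<omega>
    have mG: "G \<in> borel_measurable (PiM J (layer_measure k))"
      unfolding G_def
      by (rule Q.borel_measurable_nn_integral)
         (use measurable_compose[OF measurable_add_dim insert.prems] in \<open>simp add: split_def fun_upd_def\<close>)
    have "(\<integral>\<^sup>+\<theta>. F (\<lambda>j'\<in>insert j J. layer k \<theta> j') \<partial>PiM (Sigma (insert j J) (layer_index k)) (\<lambda>_. lborel))
        = (\<integral>\<^sup>+x. (\<integral>\<^sup>+y. F (\<lambda>j'\<in>insert j J. layer k (merge ?SJ ?Sj (x,y)) j') \<partial>PiM ?Sj (\<lambda>_. lborel)) \<partial>PiM ?SJ (\<lambda>_. lborel))"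
      unfolding un using insert(1)
      by (intro P.product_nn_integral_fold[OF disj _ _ measurable_compose[OF mR insert.prems]]) auto
    also have "\<dots> = (\<integral>\<^sup>+x. G (\<lambda>j'\<in>J. layer k x j') \<partial>PiM ?SJ (\<lambda>_. lborel))"
    proof (rule nn_integral_cong)
      fix x
      let ?w = "\<lambda>j'\<in>J. layer k x j'"
      have eq: "(\<lambda>j'\<in>insert j J. layer k (merge ?SJ ?Sj (x,y)) j') = ?w(j := layer k y j)" for y
        using insert(2) by (auto simp: layer_def merge_def fun_eq_iff)
      have "?w \<in> space (PiM J (layer_measure k))"
        by (auto simp: space_PiM layer_measure_def layer_def)
      then have "(\<lambda>w. F (?w(j:=w))) \<in> borel_measurable (layer_measure k j)"
        using measurable_compose[OF measurable_component_update insert.prems] insert(2) by blast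
      then show "(\<integral>\<^sup>+y. F (\<lambda>j'\<in>insert j J. layer k (merge ?SJ ?Sj (x,y)) j') \<partial>PiM ?Sj (\<lambda>_. lborel)) = G ?w"
        unfolding eq G_def by (rule nn_integral_layer_block)
    qed
    also have "\<dots> = (\<integral>\<^sup>+\<omega>. G \<omega> \<partial>PiM J (layer_measure k))"
      by (rule insert.IH[OF mG])
    also have "\<dots> = (\<integral>\<^sup>+\<omega>. F \<omega> \<partial>PiM (insert j J) (layer_measure k))"
      unfolding G_def by (rule Q.product_nn_integral_insert[symmetric, OF insert(1,2) insert.prems])
    finally show ?case .
  qed
qed

lemma param_index_eq_Sigma: "param_index L k = Sigma {..L} (layer_index k)"
  by (auto simp: param_index_def layer_index_def)

lemma measurable_param_component [measurable]:
  "(\<lambda>\<theta>. \<theta> x) \<in> borel_measurable (param_measure L k)"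
proof (cases "x \<in> param_index L k")
  case True
  then show ?thesis
    unfolding param_measure_def by (metis measurable_component_singleton measurable_lborel1)
next
  case False
  then have "\<theta> x = undefined" if "\<theta> \<in> space (param_measure L k)" for \<theta>
    using that False by (cases x) (auto simp: param_measure_def space_PiM PiE_def extensional_def)
  then show ?thesis by (subst measurable_cong[where g="\<lambda>_. undefined"]) auto
qed

lemma measurable_layer_param [measurable]:
  "(\<lambda>\<theta>. layer k \<theta> m) \<in> measurable (param_measure L k) (layer_measure k m)"
  unfolding layer_eq_restrict layer_measure_def
  by (rule measurable_restrict) simp

definition layer_dist :: "(nat \<Rightarrow> nat) \<Rightarrow> ((nat \<times> nat \<times> nat) \<Rightarrow> real) \<Rightarrow> nat \<Rightarrow> ((nat \<times> nat) \<Rightarrow> real) \<Rightarrow> ennreal" where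
  "layer_dist k \<theta>s j w = (SUP i\<in>{..<k (Suc j)}. ennreal (\<Sum>c\<le>k j. \<bar>w (i,c) - \<theta>s (j,i,c)\<bar>))"

lemma Wdist_eq_layer_dist: "Wdist k \<theta>s j \<theta> = layer_dist k \<theta>s j (layer k \<theta> j)"
  unfolding Wdist_def layer_dist_def
  by (intro SUP_cong refl arg_cong[where f=ennreal] sum.cong) (auto simp: layer_def layer_index_def)

lemma measurable_layer_dist [measurable]: "layer_dist k \<theta>s j \<in> borel_measurable (layer_measure k j)"
  unfolding layer_dist_def
proof (rule borel_measurable_SUP)
  fix i assume i: "i \<in> {..<k (Suc j)}"
  have "(\<lambda>w. w (i,c)) \<in> borel_measurable (layer_measure k j)" if "c \<le> k j" for c
    unfolding layer_measure_def
    by (metis measurable_component_singleton measurable_lborel1 i that lessThan_iff layer_index_def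
        mem_Sigma_iff atMost_iff)
  then show "(\<lambda>w. ennreal (\<Sum>c\<le>k j. \<bar>w (i,c) - \<theta>s (j,i,c)\<bar>)) \<in> borel_measurable (layer_measure k j)"
    by (intro measurable_compose[OF _ measurable_ennreal] borel_measurable_sum) auto
qed simp

section \<open>Expectations under a product density\<close>

lemma power2_sum_atMost:
  fixes t :: "nat \<Rightarrow> 'a::comm_semiring_1"
  shows "(\<Sum>j\<le>L. t j)\<^sup>2 = (\<Sum>j\<le>L. (t j)\<^sup>2) + 2 * (\<Sum>j\<le>L. \<Sum>j'<j. t j * t j')"
proof (induction L)
  case (Suc L)
  have "(\<Sum>j\<le>Suc L. t j)\<^sup>2 = (\<Sum>j\<le>L. t j)\<^sup>2 + (t (Suc L))\<^sup>2 + 2 * (t (Suc L) * (\<Sum>j\<le>L. t j))"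
    by (simp add: power2_eq_square algebra_simps mult_2)
  also have "t (Suc L) * (\<Sum>j\<le>L. t j) = (\<Sum>j'<Suc L. t (Suc L) * t j')"
    by (simp add: sum_distrib_left lessThan_Suc_atMost)
  finally show ?case using Suc by (simp add: algebra_simps mult_2)
qed simp

lemma prod_atLeastAtMost_split:
  fixes f :: "nat \<Rightarrow> 'a::comm_monoid_mult"
  assumes "i \<le> j" "j \<le> L"
  shows "prod f {i..L} = prod f {i..<j} * (f j * prod f {Suc j..L})"
proof -
  have "{i..L} = {i..<j} \<union> {j..L}" using assms by auto
  then have "prod f {i..L} = prod f {i..<j} * prod f {j..L}"
    by (metis prod.union_disjoint finite_atLeastLessThan finite_atLeastAtMost ivl_disj_int_two(7))
  then show ?thesis using assms by (simp add: prod.atLeast_Suc_atMost)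
qed

lemma power2_sum_prod_expand:
  fixes C a b :: "nat \<Rightarrow> 'a::comm_semiring_1"
  shows "(\<Sum>j\<le>L. C j * a j * (\<Prod>m\<in>{Suc j..L}. a m + b m))\<^sup>2
    = (\<Sum>j\<le>L. (C j)\<^sup>2 * ((a j)\<^sup>2 * (\<Prod>m\<in>{Suc j..L}. (a m + b m)\<^sup>2)))
      + 2 * (\<Sum>j\<le>L. \<Sum>j'<j. C j * C j' * ((a j * (a j + b j) * (\<Prod>m\<in>{Suc j..L}. (a m + b m)\<^sup>2))
                                          * (a j' * (\<Prod>m\<in>{Suc j'..<j}. a m + b m))))"
proof -
  let ?P = "\<lambda>j. \<Prod>m\<in>{Suc j..L}. a m + b m"
  have "?P j' = (\<Prod>m\<in>{Suc j'..<j}. a m + b m) * ((a j + b j) * ?P j)" if "j' < j" "j \<le> L" for j j'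
    using that by (intro prod_atLeastAtMost_split) auto
  then have cross: "(C j * a j * ?P j) * (C j' * a j' * ?P j')
      = C j * C j' * ((a j * (a j + b j) * (\<Prod>m\<in>{Suc j..L}. (a m + b m)\<^sup>2))
                    * (a j' * (\<Prod>m\<in>{Suc j'..<j}. a m + b m)))" if "j' < j" "j \<le> L" for j j'
    using that by (simp add: power2_eq_square prod.distrib mult_ac)
  have "(\<Sum>j\<le>L. C j * a j * ?P j)\<^sup>2
      = (\<Sum>j\<le>L. (C j * a j * ?P j)\<^sup>2) + 2 * (\<Sum>j\<le>L. \<Sum>j'<j. (C j * a j * ?P j) * (C j' * a j' * ?P j'))"
    by (rule power2_sum_atMost)
  also have "(\<Sum>j\<le>L. \<Sum>j'<j. (C j * a j * ?P j) * (C j' * a j' * ?P j'))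
      = (\<Sum>j\<le>L. \<Sum>j'<j. C j * C j' * ((a j * (a j + b j) * (\<Prod>m\<in>{Suc j..L}. (a m + b m)\<^sup>2))
                                          * (a j' * (\<Prod>m\<in>{Suc j'..<j}. a m + b m))))"
    by (intro sum.cong refl cross) auto
  finally show ?thesis
    by (simp add: power_mult_distrib prod_power_distrib mult_ac)
qed

lemma Eq_mono: "(\<And>\<theta>. f \<theta> \<le> g \<theta>) \<Longrightarrow> Eq L k q f \<le> Eq L k q g"
  unfolding Eq_def by (intro nn_integral_mono mult_right_mono) auto

locale layer_density =
  fixes L :: nat and k :: "nat \<Rightarrow> nat" and q :: "nat \<Rightarrow> ((nat \<times> nat) \<Rightarrow> real) \<Rightarrow> real"
  assumes q_measurable: "\<And>j. j \<le> L \<Longrightarrow> q j \<in> borel_measurable (layer_measure k j)"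
    and q_nonneg: "\<And>j w. j \<le> L \<Longrightarrow> q j w \<ge> 0"
    and q_normalized: "\<And>j. j \<le> L \<Longrightarrow> (\<integral>\<^sup>+w. ennreal (q j w) \<partial>layer_measure k j) = 1"
begin

lemma measurable_prod_density: "(\<lambda>\<theta>. ennreal (prod_density L k q \<theta>)) \<in> borel_measurable (param_measure L k)"
  unfolding prod_density_def
  by (rule measurable_compose[OF _ measurable_ennreal], rule borel_measurable_prod,
      rule measurable_compose[OF measurable_layer_param]) (use q_measurable in auto)

lemma Eq_add:
  assumes "f \<in> borel_measurable (param_measure L k)" "g \<in> borel_measurable (param_measure L k)"
  shows "Eq L k q (\<lambda>\<theta>. f \<theta> + g \<theta>) = Eq L k q f + Eq L k q g"
  unfolding Eq_def distrib_right
  by (rule nn_integral_add) (use measurable_prod_density assms in auto)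

lemma Eq_cmult:
  assumes "f \<in> borel_measurable (param_measure L k)"
  shows "Eq L k q (\<lambda>\<theta>. c * f \<theta>) = c * Eq L k q f"
  unfolding Eq_def mult.assoc
  by (rule nn_integral_cmult) (use measurable_prod_density assms in auto)

lemma Eq_sum:
  assumes "finite I" "\<And>i. i \<in> I \<Longrightarrow> f i \<in> borel_measurable (param_measure L k)"
  shows "Eq L k q (\<lambda>\<theta>. \<Sum>i\<in>I. f i \<theta>) = (\<Sum>i\<in>I. Eq L k q (f i))"
  unfolding Eq_def sum_distrib_right
  by (rule nn_integral_sum) (use measurable_prod_density assms in auto)

lemma Eq_eq_layer_integral:
  assumes \<Phi>: "\<Phi> \<in> borel_measurable (PiM {..L} (layer_measure k))"
  shows "Eq L k q (\<lambda>\<theta>. \<Phi> (\<lambda>j\<in>{..L}. layer k \<theta> j))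
       = (\<integral>\<^sup>+\<omega>. \<Phi> \<omega> * ennreal (\<Prod>j\<le>L. q j (\<omega> j)) \<partial>PiM {..L} (layer_measure k))"
proof -
  have "(\<lambda>\<omega>. \<Prod>j\<le>L. q j (\<omega> j)) \<in> borel_measurable (PiM {..L} (layer_measure k))"
    by (rule borel_measurable_prod, rule measurable_compose[OF measurable_component_singleton])
       (use q_measurable in auto)
  then have "(\<lambda>\<omega>. \<Phi> \<omega> * ennreal (\<Prod>j\<le>L. q j (\<omega> j))) \<in> borel_measurable (PiM {..L} (layer_measure k))"
    using \<Phi> by measurable
  then show ?thesis
    unfolding Eq_def prod_density_def param_measure_def param_index_eq_Sigma
    by (simp add: nn_integral_layers[symmetric] cong: nn_integral_cong)
qed

lemma Eq_prod_atMost: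
  assumes g: "\<And>j. j \<le> L \<Longrightarrow> g j \<in> borel_measurable (layer_measure k j)"
  shows "Eq L k q (\<lambda>\<theta>. \<Prod>j\<le>L. g j (layer k \<theta> j))
       = (\<Prod>j\<le>L. \<integral>\<^sup>+w. g j w * ennreal (q j w) \<partial>layer_measure k j)"
proof -
  interpret Q: product_sigma_finite "layer_measure k" by (rule product_sigma_finite_layer_measure)
  have "(\<lambda>\<omega>. \<Prod>j\<le>L. g j (\<omega> j)) \<in> borel_measurable (PiM {..L} (layer_measure k))"
    by (rule borel_measurable_prod_ennreal, rule measurable_compose[OF measurable_component_singleton])
       (use g in auto)
  then have "Eq L k q (\<lambda>\<theta>. \<Prod>j\<le>L. g j (layer k \<theta> j))
      = (\<integral>\<^sup>+\<omega>. (\<Prod>j\<le>L. g j (\<omega> j)) * ennreal (\<Prod>j\<le>L. q j (\<omega> j)) \<partial>PiM {..L} (layer_measure k))"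
    using Eq_eq_layer_integral[of "\<lambda>\<omega>. \<Prod>j\<le>L. g j (\<omega> j)"] by simp
  also have "\<dots> = (\<integral>\<^sup>+\<omega>. (\<Prod>j\<le>L. g j (\<omega> j) * ennreal (q j (\<omega> j))) \<partial>PiM {..L} (layer_measure k))"
  proof (intro nn_integral_cong)
    fix \<omega>
    have "ennreal (\<Prod>j\<le>L. q j (\<omega> j)) = (\<Prod>j\<le>L. ennreal (q j (\<omega> j)))"
      using q_nonneg by (intro prod_ennreal[symmetric]) auto
    then show "(\<Prod>j\<le>L. g j (\<omega> j)) * ennreal (\<Prod>j\<le>L. q j (\<omega> j))
        = (\<Prod>j\<le>L. g j (\<omega> j) * ennreal (q j (\<omega> j)))"
      by (simp add: prod.distrib)
  qed
  also have "\<dots> = (\<Prod>j\<le>L. \<integral>\<^sup>+w. g j w * ennreal (q j w) \<partial>layer_measure k j)"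
    using g q_measurable
    by (intro Q.product_nn_integral_prod)
       (auto intro!: borel_measurable_times_ennreal measurable_compose[OF _ measurable_ennreal])
  finally show ?thesis .
qed

lemma Eq_prod_subset:
  assumes J: "J \<subseteq> {..L}" and g: "\<And>j. j \<in> J \<Longrightarrow> g j \<in> borel_measurable (layer_measure k j)"
  shows "Eq L k q (\<lambda>\<theta>. \<Prod>j\<in>J. g j (layer k \<theta> j))
       = (\<Prod>j\<in>J. \<integral>\<^sup>+w. g j w * ennreal (q j w) \<partial>layer_measure k j)"
proof -
  define g' where "g' j w = (if j \<in> J then g j w else 1)" for j w
  have restrict: "(\<Prod>j\<le>L. if j \<in> J then a j else 1) = prod a J" for a :: "nat \<Rightarrow> ennreal"
    using J by (simp add: prod.inter_restrict[symmetric] Int_absorb1)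
  have "Eq L k q (\<lambda>\<theta>. \<Prod>j\<in>J. g j (layer k \<theta> j)) = Eq L k q (\<lambda>\<theta>. \<Prod>j\<le>L. g' j (layer k \<theta> j))"
    by (simp add: g'_def restrict)
  also have "\<dots> = (\<Prod>j\<le>L. \<integral>\<^sup>+w. g' j w * ennreal (q j w) \<partial>layer_measure k j)"
  proof (rule Eq_prod_atMost)
    show "g' j \<in> borel_measurable (layer_measure k j)" for j
      using g by (cases "j \<in> J") (simp_all add: g'_def[abs_def])
  qed
  also have "\<dots> = (\<Prod>j\<le>L. if j \<in> J then \<integral>\<^sup>+w. g j w * ennreal (q j w) \<partial>layer_measure k j else 1)"
    by (intro prod.cong) (auto simp: g'_def q_normalized)
  also have "\<dots> = (\<Prod>j\<in>J. \<integral>\<^sup>+w. g j w * ennreal (q j w) \<partial>layer_measure k j)"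
    by (rule restrict)
  finally show ?thesis .
qed

lemma Eq_layer:
  assumes "j \<le> L" "h \<in> borel_measurable (layer_measure k j)"
  shows "Eq L k q (\<lambda>\<theta>. h (layer k \<theta> j)) = (\<integral>\<^sup>+w. h w * ennreal (q j w) \<partial>layer_measure k j)"
  using Eq_prod_subset[of "{j}" "\<lambda>_. h"] assms by simp

lemma Eq_prod_layers:
  assumes "J \<subseteq> {..L}" "\<And>j. j \<in> J \<Longrightarrow> g j \<in> borel_measurable (layer_measure k j)"
  shows "Eq L k q (\<lambda>\<theta>. \<Prod>j\<in>J. g j (layer k \<theta> j)) = (\<Prod>j\<in>J. Eq L k q (\<lambda>\<theta>. g j (layer k \<theta> j)))"
  using assms by (simp add: Eq_prod_subset subset_eq Eq_layer cong: prod.cong)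


lemma Eq_head_prod:
  assumes "j \<le> L" "f \<in> borel_measurable (layer_measure k j)"
    and "\<And>m. g m \<in> borel_measurable (layer_measure k m)"
  shows "Eq L k q (\<lambda>\<theta>. f (layer k \<theta> j) * (\<Prod>m\<in>{Suc j..L}. g m (layer k \<theta> m)))
       = Eq L k q (\<lambda>\<theta>. f (layer k \<theta> j)) * (\<Prod>m\<in>{Suc j..L}. Eq L k q (\<lambda>\<theta>. g m (layer k \<theta> m)))"
proof -
  let ?h = "\<lambda>m. if m = j then f else g m"
  have h: "?h j = f" "\<And>m. m \<in> {Suc j..L} \<Longrightarrow> ?h m = g m" by auto
  have "Eq L k q (\<lambda>\<theta>. f (layer k \<theta> j) * (\<Prod>m\<in>{Suc j..L}. g m (layer k \<theta> m)))
      = Eq L k q (\<lambda>\<theta>. \<Prod>m\<in>{j..L}. ?h m (layer k \<theta> m))"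
    using assms(1) by (simp only: prod.atLeast_Suc_atMost h cong: prod.cong)
  also have "\<dots> = (\<Prod>m\<in>{j..L}. Eq L k q (\<lambda>\<theta>. ?h m (layer k \<theta> m)))"
    using assms by (intro Eq_prod_layers) auto
  also have "\<dots> = Eq L k q (\<lambda>\<theta>. f (layer k \<theta> j)) * (\<Prod>m\<in>{Suc j..L}. Eq L k q (\<lambda>\<theta>. g m (layer k \<theta> m)))"
    using assms(1) by (simp only: prod.atLeast_Suc_atMost h cong: prod.cong)
  finally show ?thesis .
qed

lemma Eq_two_blocks:
  assumes "j' < j" "j \<le> L"
    and "f \<in> borel_measurable (layer_measure k j)" "u \<in> borel_measurable (layer_measure k j')"
    and "\<And>m. g m \<in> borel_measurable (layer_measure k m)" "\<And>m. v m \<in> borel_measurable (layer_measure k m)"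
  shows "Eq L k q (\<lambda>\<theta>. (f (layer k \<theta> j) * (\<Prod>m\<in>{Suc j..L}. g m (layer k \<theta> m)))
                      * (u (layer k \<theta> j') * (\<Prod>m\<in>{Suc j'..<j}. v m (layer k \<theta> m))))
       = (Eq L k q (\<lambda>\<theta>. f (layer k \<theta> j)) * (\<Prod>m\<in>{Suc j..L}. Eq L k q (\<lambda>\<theta>. g m (layer k \<theta> m))))
         * (Eq L k q (\<lambda>\<theta>. u (layer k \<theta> j')) * (\<Prod>m\<in>{Suc j'..<j}. Eq L k q (\<lambda>\<theta>. v m (layer k \<theta> m))))"
proof -
  let ?h = "\<lambda>m. if m = j' then u else if m < j then v m else if m = j then f else g m"
  have h: "?h j' = u" "?h j = f" "\<And>m. m \<in> {Suc j'..<j} \<Longrightarrow> ?h m = v m"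
      "\<And>m. m \<in> {Suc j..L} \<Longrightarrow> ?h m = g m"
    using assms(1) by auto
  have blocks: "prod F {j'..L} = F j' * prod F {Suc j'..<j} * (F j * prod F {Suc j..L})" for F :: "nat \<Rightarrow> ennreal"
    using assms(1,2) prod.atLeast_Suc_atMost[of j' L F] prod_atLeastAtMost_split[of "Suc j'" j L F]
    by (simp add: mult.assoc)
  have "Eq L k q (\<lambda>\<theta>. (f (layer k \<theta> j) * (\<Prod>m\<in>{Suc j..L}. g m (layer k \<theta> m)))
                      * (u (layer k \<theta> j') * (\<Prod>m\<in>{Suc j'..<j}. v m (layer k \<theta> m))))
      = Eq L k q (\<lambda>\<theta>. \<Prod>m\<in>{j'..L}. ?h m (layer k \<theta> m))"
    by (simp only: blocks h cong: prod.cong) (simp add: mult_ac)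
  also have "\<dots> = (\<Prod>m\<in>{j'..L}. Eq L k q (\<lambda>\<theta>. ?h m (layer k \<theta> m)))"
    using assms by (intro Eq_prod_layers) auto
  also have "\<dots> = (Eq L k q (\<lambda>\<theta>. f (layer k \<theta> j)) * (\<Prod>m\<in>{Suc j..L}. Eq L k q (\<lambda>\<theta>. g m (layer k \<theta> m))))
         * (Eq L k q (\<lambda>\<theta>. u (layer k \<theta> j')) * (\<Prod>m\<in>{Suc j'..<j}. Eq L k q (\<lambda>\<theta>. v m (layer k \<theta> m))))"
    by (simp only: blocks h cong: prod.cong) (simp add: mult_ac)
  finally show ?thesis .
qed

lemma Eq_power2_layer_sum:
  assumes a: "\<And>m. a m \<in> borel_measurable (layer_measure k m)"
  shows "Eq L k q (\<lambda>\<theta>. (\<Sum>j\<le>L. C j * a j (layer k \<theta> j) * (\<Prod>m\<in>{Suc j..L}. a m (layer k \<theta> m) + b m))\<^sup>2)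
    = (\<Sum>j\<le>L. (C j)\<^sup>2 * Eq L k q (\<lambda>\<theta>. (a j (layer k \<theta> j))\<^sup>2)
            * (\<Prod>m\<in>{Suc j..L}. Eq L k q (\<lambda>\<theta>. (a m (layer k \<theta> m) + b m)\<^sup>2)))
     + 2 * (\<Sum>j\<le>L. \<Sum>j'<j. C j * C j'
            * Eq L k q (\<lambda>\<theta>. a j (layer k \<theta> j) * (a j (layer k \<theta> j) + b j))
            * (\<Prod>m\<in>{Suc j..L}. Eq L k q (\<lambda>\<theta>. (a m (layer k \<theta> m) + b m)\<^sup>2))
            * Eq L k q (\<lambda>\<theta>. a j' (layer k \<theta> j'))
            * (\<Prod>m\<in>{Suc j'..<j}. Eq L k q (\<lambda>\<theta>. a m (layer k \<theta> m) + b m)))"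
proof -
  note a [measurable]
  let ?a = "\<lambda>m \<theta>. a m (layer k \<theta> m)"
  have diag: "Eq L k q (\<lambda>\<theta>. (?a j \<theta>)\<^sup>2 * (\<Prod>m\<in>{Suc j..L}. (?a m \<theta> + b m)\<^sup>2))
      = Eq L k q (\<lambda>\<theta>. (?a j \<theta>)\<^sup>2) * (\<Prod>m\<in>{Suc j..L}. Eq L k q (\<lambda>\<theta>. (?a m \<theta> + b m)\<^sup>2))"
    if "j \<le> L" for j
    by (rule Eq_head_prod[OF that, where f="\<lambda>w. (a j w)\<^sup>2" and g="\<lambda>m w. (a m w + b m)\<^sup>2"]; measurable)
  have cross: "Eq L k q (\<lambda>\<theta>. (?a j \<theta> * (?a j \<theta> + b j) * (\<Prod>m\<in>{Suc j..L}. (?a m \<theta> + b m)\<^sup>2))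
                              * (?a j' \<theta> * (\<Prod>m\<in>{Suc j'..<j}. ?a m \<theta> + b m)))
      = (Eq L k q (\<lambda>\<theta>. ?a j \<theta> * (?a j \<theta> + b j)) * (\<Prod>m\<in>{Suc j..L}. Eq L k q (\<lambda>\<theta>. (?a m \<theta> + b m)\<^sup>2)))
        * (Eq L k q (\<lambda>\<theta>. ?a j' \<theta>) * (\<Prod>m\<in>{Suc j'..<j}. Eq L k q (\<lambda>\<theta>. ?a m \<theta> + b m)))"
    if "j' < j" "j \<le> L" for j j'
    by (rule Eq_two_blocks[OF that, where f="\<lambda>w. a j w * (a j w + b j)"
          and g="\<lambda>m w. (a m w + b m)\<^sup>2" and u="a j'" and v="\<lambda>m w. a m w + b m"]; measurable)
  have "Eq L k q (\<lambda>\<theta>. (\<Sum>j\<le>L. C j * ?a j \<theta> * (\<Prod>m\<in>{Suc j..L}. ?a m \<theta> + b m))\<^sup>2)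
      = (\<Sum>j\<le>L. (C j)\<^sup>2 * Eq L k q (\<lambda>\<theta>. (?a j \<theta>)\<^sup>2 * (\<Prod>m\<in>{Suc j..L}. (?a m \<theta> + b m)\<^sup>2)))
      + 2 * (\<Sum>j\<le>L. \<Sum>j'<j. C j * C j'
          * Eq L k q (\<lambda>\<theta>. (?a j \<theta> * (?a j \<theta> + b j) * (\<Prod>m\<in>{Suc j..L}. (?a m \<theta> + b m)\<^sup>2))
                          * (?a j' \<theta> * (\<Prod>m\<in>{Suc j'..<j}. ?a m \<theta> + b m))))"
    unfolding power2_sum_prod_expand
    by (subst Eq_add Eq_cmult Eq_sum; measurable?)+
  also have "\<dots> = (\<Sum>j\<le>L. (C j)\<^sup>2 * (Eq L k q (\<lambda>\<theta>. (?a j \<theta>)\<^sup>2)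
                        * (\<Prod>m\<in>{Suc j..L}. Eq L k q (\<lambda>\<theta>. (?a m \<theta> + b m)\<^sup>2))))
      + 2 * (\<Sum>j\<le>L. \<Sum>j'<j. C j * C j'
          * ((Eq L k q (\<lambda>\<theta>. ?a j \<theta> * (?a j \<theta> + b j)) * (\<Prod>m\<in>{Suc j..L}. Eq L k q (\<lambda>\<theta>. (?a m \<theta> + b m)\<^sup>2)))
             * (Eq L k q (\<lambda>\<theta>. ?a j' \<theta>) * (\<Prod>m\<in>{Suc j'..<j}. Eq L k q (\<lambda>\<theta>. ?a m \<theta> + b m)))))"
    by (simp add: diag cross)
  finally show ?thesis
    by (simp add: mult_ac)
qed

end

theorem lemmaA5:
  fixes \<psi> :: "real \<Rightarrow> real"
    and L p :: nat and k s :: "nat \<Rightarrow> nat" and B :: "nat \<Rightarrow> real"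
    and \<eta>0 :: "(nat \<Rightarrow> real) \<Rightarrow> real"
    and \<theta>s :: "(nat \<times> nat \<times> nat) \<Rightarrow> real"
    and q :: "nat \<Rightarrow> ((nat \<times> nat) \<Rightarrow> real) \<Rightarrow> real"
  assumes L: "L \<ge> 1"
    and k0: "k 0 = p" and kL: "k (Suc L) = 1" and kpos: "\<forall>l\<le>Suc L. k l \<ge> 1"
    and B: "\<forall>l\<le>L. B l \<ge> 1"
    and lip: "\<forall>x y. \<bar>\<psi> x - \<psi> y\<bar> \<le> \<bar>x - y\<bar>"
    and psi_bd: "\<forall>x. \<bar>\<psi> x\<bar> \<le> \<bar>x\<bar>"
    and \<theta>s_F: "in_F L k s B \<theta>s"
    and \<theta>s_min: "\<forall>\<theta>. in_F L k s B \<theta> \<longrightarrow>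
        (sup_dist p (eta \<psi> L k \<theta>s) \<eta>0)\<^sup>2 \<le> (sup_dist p (eta \<psi> L k \<theta>) \<eta>0)\<^sup>2"
    and q_meas: "\<forall>j\<le>L. q j \<in> borel_measurable (layer_measure k j)"
    and q_nonneg: "\<forall>j\<le>L. \<forall>w. q j w \<ge> 0"
    and q_norm: "\<forall>j\<le>L. (\<integral>\<^sup>+ w. ennreal (q j w) \<partial>(layer_measure k j)) = 1"
  shows "Eq L k q (\<lambda>\<theta>. L2_dist_sq p (eta \<psi> L k \<theta>) (eta \<psi> L k \<theta>s))
    \<le> (\<Sum>j\<le>L. (ennreal (\<Prod>m<j. B m))\<^sup>2 * Eq L k q (\<lambda>\<theta>. (Wdist k \<theta>s j \<theta>)\<^sup>2)
            * (\<Prod>m\<in>{Suc j..L}. Eq L k q (\<lambda>\<theta>. (Wdist k \<theta>s m \<theta> + ennreal (B m))\<^sup>2)))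
     + 2 * (\<Sum>j\<le>L. \<Sum>j'<j. ennreal (\<Prod>m<j. B m) * ennreal (\<Prod>m<j'. B m)
            * Eq L k q (\<lambda>\<theta>. Wdist k \<theta>s j \<theta> * (Wdist k \<theta>s j \<theta> + ennreal (B j)))
            * (\<Prod>m\<in>{Suc j..L}. Eq L k q (\<lambda>\<theta>. (Wdist k \<theta>s m \<theta> + ennreal (B m))\<^sup>2))
            * Eq L k q (\<lambda>\<theta>. Wdist k \<theta>s j' \<theta>)
            * (\<Prod>m\<in>{Suc j'..<j}. Eq L k q (\<lambda>\<theta>. Wdist k \<theta>s m \<theta> + ennreal (B m))))"
proof -
  interpret layer_density L k q
    using q_meas q_nonneg q_norm by unfold_locales auto
  have "Eq L k q (\<lambda>\<theta>. L2_dist_sq p (eta \<psi> L k \<theta>) (eta \<psi> L k \<theta>s))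
      \<le> Eq L k q (\<lambda>\<theta>. (\<Sum>j\<le>L. ennreal (\<Prod>m<j. B m) * Wdist k \<theta>s j \<theta>
                          * (\<Prod>m\<in>{Suc j..L}. Wdist k \<theta>s m \<theta> + ennreal (B m)))\<^sup>2)"
    using \<theta>s_F B lip psi_bd
    by (intro Eq_mono L2_dist_sq_eta_le[OF k0 kL]) (auto simp: in_F_def)
  then show ?thesis
    by (simp only: Wdist_eq_layer_dist Eq_power2_layer_sum[OF measurable_layer_dist])
qed

end
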